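(* Let $g:\mathbb{R}\to[0,1]$ be measurable, even ($g(-x)=g(x)$) and $\pi$-periodic ($g(x+\pi)=g(x)$). For positive integers $m,n$ let $\mu=\pi/n$ and $$\tilde{G}(m,n)=\frac{1}{\pi}\int_{-\pi/2}^{\pi/2}\prod_{i=0}^{n-1} g(x+mi\mu)\,dx.$$ Then for all positive integers $m,n$, $\tilde{G}(m,n)\ge \tilde{G}(1,n)$.
   Context: $g(x)$ is the probability of not detecting a target (with rectangular symmetry) observed at angle $x$; $\tilde G(m,n)$ is the average probability of no detection over a uniformly distributed target orientation when $n$ independent observations are made at angles separated consecutively by $m\pi/n$. *)

theory Defs
  imports "HOL-Analysis.Analysis"
begin

definition Gtilde :: "(real \<Rightarrow> real) \<Rightarrow> nat \<Rightarrow> nat \<Rightarrow> real" where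
  "Gtilde g m n = (1 / pi) *
     (LBINT x=-(pi/2)..pi/2. (\<Prod>i<n. g (x + real m * real i * (pi / real n))))"

end

theory Submission
  imports Defs
begin

text \<open>Write \<open>P\<^sub>m(x) = \<Prod>\<^sub>i<n g(x + m i \<mu>)\<close>. Since \<open>g\<close> has period \<open>n \<mu> = \<pi>\<close>, the
  product of the \<open>n\<close> shifted copies \<open>P\<^sub>m(x + k \<mu>)\<close>, \<open>k < n\<close>, is \<open>P\<^sub>1(x)\<^sup>n\<close>: swapping the
  two products turns each factor into a translate of \<open>P\<^sub>1\<close>, which is invariant under
  \<open>x \<mapsto> x + \<mu>\<close>. By AM-GM, \<open>P\<^sub>1(x)\<close> is at most the mean of the \<open>P\<^sub>m(x + k \<mu>)\<close>, and
  integrating over a period, where every shift has the same integral, gives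
  \<open>\<integral> P\<^sub>1 \<le> \<integral> P\<^sub>m\<close>.\<close>

lemma bounded_measurable_set_integrable:
  fixes h :: "real \<Rightarrow> real"
  assumes "h \<in> borel_measurable borel" "\<And>x. \<bar>h x\<bar> \<le> B"
  shows "set_integrable lborel {a..b} h"
proof (rule set_integrable_bound[where f="\<lambda>_. B"])
  show "set_integrable lborel {a..b} (\<lambda>_. B)"
    unfolding set_integrable_def by (rule borel_integrable_compact) auto
  show "set_borel_measurable lborel {a..b} h"
    unfolding set_borel_measurable_def using assms(1) by simp
  show "AE x in lborel. x \<in> {a..b} \<longrightarrow> norm (h x) \<le> norm B"
    using assms(2) by (auto intro: order_trans[OF _ abs_ge_self])
qed

lemma bounded_measurable_integrable_on:
  fixes h :: "real \<Rightarrow> real"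
  assumes "h \<in> borel_measurable borel" "\<And>x. \<bar>h x\<bar> \<le> B"
  shows "h integrable_on {a..b}"
  using set_borel_integral_eq_integral(1)[OF bounded_measurable_set_integrable[OF assms]] .

lemma integral_shift_periodic:
  fixes h :: "real \<Rightarrow> 'a::banach"
  assumes int: "\<And>u v. h integrable_on {u..v}" and per: "\<And>x. h (x + p) = h x"
    and c: "0 \<le> c" "c \<le> p"
  shows "integral {a..a+p} (\<lambda>x. h (x + c)) = integral {a..a+p} h"
proof -
  have "integral {a..a+p} (\<lambda>x. h (x + c)) = integral {a+c..a+p+c} h"
    using integral_shift_real_ivl[where a="a+c" and b="a+p+c" and c=c and f=h] by simp
  also have "\<dots> = integral {a+c..a+p} h + integral {a+p..a+p+c} h"
    by (rule Henstock_Kurzweil_Integration.integral_combine[symmetric]) (use c int in auto)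
  also have "integral {a+p..a+p+c} h = integral {a..a+c} h"
    using integral_shift_real_ivl[where a="a+p" and b="a+p+c" and c=p and f=h] per
    by (simp add: algebra_simps)
  also have "integral {a+c..a+p} h + integral {a..a+c} h = integral {a..a+p} h"
    by (subst add.commute, rule Henstock_Kurzweil_Integration.integral_combine) (use c int in auto)
  finally show ?thesis .
qed

lemma integral_le_if_le_mean_of_shifts:
  fixes f h :: "real \<Rightarrow> real"
  assumes n: "0 < n" and p: "0 \<le> p"
    and f_int: "f integrable_on {a..a+p}" and h_int: "\<And>u v. h integrable_on {u..v}"
    and per: "\<And>x. h (x + p) = h x"
    and le: "\<And>x. f x \<le> (\<Sum>k<n. h (x + real k * (p / real n))) / real n"
  shows "integral {a..a+p} f \<le> integral {a..a+p} h"
proof -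
  define s where "s k = real k * (p / real n)" for k
  have shift_int: "(\<lambda>x. h (x + c)) integrable_on {a..a+p}" for c
    using integrable_shift_real_ivl[OF h_int, where c=c and a="a+c" and b="a+p+c"] by simp
  have "integral {a..a+p} f \<le> integral {a..a+p} (\<lambda>x. (\<Sum>k<n. h (x + s k)) / real n)"
    using le f_int shift_int unfolding s_def
    by (intro integral_le integrable_sum integrable_on_divide) auto
  also have "\<dots> = (\<Sum>k<n. integral {a..a+p} (\<lambda>x. h (x + s k))) / real n"
    using shift_int by (simp add: integral_sum)
  also have "\<dots> = (\<Sum>k<n. integral {a..a+p} h) / real n"
  proof (intro arg_cong[where f="\<lambda>t. t / real n"] sum.cong refl)
    fix k assume "k \<in> {..<n}"
    then have "0 \<le> s k" "s k \<le> p"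
      using n p by (auto simp: s_def field_simps intro: mult_left_mono)
    then show "integral {a..a+p} (\<lambda>x. h (x + s k)) = integral {a..a+p} h"
      by (rule integral_shift_periodic[where h=h, OF h_int per])
  qed
  also have "\<dots> = integral {a..a+p} h"
    using n by simp
  finally show ?thesis .
qed

lemma prod_shift_invariant_if_periodic:
  fixes f :: "real \<Rightarrow> 'a::comm_monoid_mult"
  assumes per: "\<And>x. f (x + real n * d) = f x"
  shows "(\<Prod>i<n. f (x + d + real i * d)) = (\<Prod>i<n. f (x + real i * d))"
proof (cases n)
  case (Suc n')
  have "(\<Prod>i<n. f (x + d + real i * d)) = (\<Prod>i<Suc n'. f (x + real (Suc i) * d))"
    using Suc by (simp add: algebra_simps)
  also have "\<dots> = (\<Prod>i<n'. f (x + real (Suc i) * d)) * f x"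
    using per[of x] Suc by simp
  also have "\<dots> = f (x + real 0 * d) * (\<Prod>i<n'. f (x + real (Suc i) * d))"
    by (simp add: mult.commute del: of_nat_Suc)
  also have "\<dots> = (\<Prod>i<n. f (x + real i * d))"
    using Suc by (simp only: prod.lessThan_Suc_shift)
  finally show ?thesis .
qed simp

lemma prod_shift_multiple_invariant_if_periodic:
  fixes f :: "real \<Rightarrow> 'a::comm_monoid_mult"
  assumes per: "\<And>x. f (x + real n * d) = f x"
  shows "(\<Prod>i<n. f (x + real k * d + real i * d)) = (\<Prod>i<n. f (x + real i * d))"
proof (induction k)
  case (Suc k)
  have "(\<Prod>i<n. f (x + real (Suc k) * d + real i * d))
      = (\<Prod>i<n. f ((x + real k * d) + d + real i * d))"
    by (simp add: algebra_simps)
  also have "\<dots> = (\<Prod>i<n. f (x + real k * d + real i * d))"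
    by (rule prod_shift_invariant_if_periodic[where f=f, OF per])
  finally show ?case
    using Suc.IH by simp
qed simp

lemma prod_of_shifted_strided_prods:
  fixes f :: "real \<Rightarrow> 'a::comm_monoid_mult"
  assumes per: "\<And>x. f (x + real n * d) = f x"
  shows "(\<Prod>k<n. \<Prod>i<n. f (x + real k * d + real m * real i * d))
       = (\<Prod>k<n. f (x + real k * d)) ^ n"
proof -
  have "(\<Prod>k<n. \<Prod>i<n. f (x + real k * d + real m * real i * d))
      = (\<Prod>i<n. \<Prod>k<n. f (x + real (m * i) * d + real k * d))"
    by (subst prod.swap) (simp add: algebra_simps)
  also have "\<dots> = (\<Prod>i<n. \<Prod>k<n. f (x + real k * d))"
    by (simp only: prod_shift_multiple_invariant_if_periodic[where f=f, OF per])
  finally show ?thesis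
    by simp
qed

lemma le_mean_if_prod_eq_power:
  fixes a :: "nat \<Rightarrow> real"
  assumes n: "0 < n" and a: "\<And>k. 0 \<le> a k" and c: "0 \<le> c"
    and prod: "(\<Prod>k<n. a k) = c ^ n"
  shows "c \<le> (\<Sum>k<n. a k) / real n"
proof -
  have "c = (c ^ n) powr (1 / real n)"
    using n c by (cases "c = 0") (simp_all add: powr_realpow[symmetric] powr_powr)
  also have "\<dots> \<le> (\<Sum>k<n. a k / real n)"
    using arith_geom_mean[of "{..<n}" a] n a prod by (simp add: lessThan_empty_iff)
  finally show ?thesis
    by (simp add: sum_divide_distrib)
qed

definition obs_prod :: "(real \<Rightarrow> real) \<Rightarrow> nat \<Rightarrow> nat \<Rightarrow> real \<Rightarrow> real" where
  "obs_prod g m n x = (\<Prod>i<n. g (x + real m * real i * (pi / real n)))"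

lemma obs_prod_measurable:
  assumes "g \<in> borel_measurable borel"
  shows "obs_prod g m n \<in> borel_measurable borel"
  unfolding obs_prod_def by (intro borel_measurable_prod measurable_compose[OF _ assms]) auto

lemma obs_prod_nonneg:
  assumes "\<And>x. 0 \<le> g x"
  shows "0 \<le> obs_prod g m n x"
  unfolding obs_prod_def using assms by (auto intro: prod_nonneg)

lemma obs_prod_abs_le_1:
  assumes "\<And>x. 0 \<le> g x \<and> g x \<le> 1"
  shows "\<bar>obs_prod g m n x\<bar> \<le> 1"
  unfolding obs_prod_def using assms by (subst abs_of_nonneg) (auto intro!: prod_nonneg prod_le_1)

lemma obs_prod_integrable_on:
  assumes "g \<in> borel_measurable borel" "\<And>x. 0 \<le> g x \<and> g x \<le> 1"
  shows "obs_prod g m n integrable_on {a..b}"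
  using bounded_measurable_integrable_on[OF obs_prod_measurable obs_prod_abs_le_1] assms .

lemma Gtilde_eq_integral:
  assumes "g \<in> borel_measurable borel" "\<And>x. 0 \<le> g x \<and> g x \<le> 1"
  shows "Gtilde g m n = integral {-(pi/2)..pi/2} (obs_prod g m n) / pi"
  using interval_integral_eq_integral[of "-(pi/2)" "pi/2" "obs_prod g m n"]
    bounded_measurable_set_integrable[OF obs_prod_measurable obs_prod_abs_le_1] assms
  unfolding Gtilde_def obs_prod_def by simp

lemma obs_prod_periodic:
  assumes "\<And>x. g (x + pi) = g x"
  shows "obs_prod g m n (x + pi) = obs_prod g m n x"
  unfolding obs_prod_def by (intro prod.cong refl) (metis add.commute add.left_commute assms)

lemma obs_prod_1_le_mean_of_shifts:
  assumes nonneg: "\<And>x. 0 \<le> g x" and periodic: "\<And>x. g (x + pi) = g x" and n: "0 < n"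
  shows "obs_prod g 1 n x \<le> (\<Sum>k<n. obs_prod g m n (x + real k * (pi / real n))) / real n"
proof (rule le_mean_if_prod_eq_power[OF n obs_prod_nonneg obs_prod_nonneg])
  have per: "g (y + real n * (pi / real n)) = g y" for y
    using n periodic by simp
  show "(\<Prod>k<n. obs_prod g m n (x + real k * (pi / real n))) = obs_prod g 1 n x ^ n"
    using prod_of_shifted_strided_prods[where f=g, OF per, of x m] by (simp add: obs_prod_def)
qed (use nonneg in auto)

theorem theorem4p2:
  fixes g :: "real \<Rightarrow> real" and m n :: nat
  assumes meas: "g \<in> borel_measurable borel"
    and range: "\<And>x. 0 \<le> g x \<and> g x \<le> 1"
    and even: "\<And>x. g (- x) = g x"
    and periodic: "\<And>x. g (x + pi) = g x"
    and m_pos: "0 < m" and n_pos: "0 < n"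
  shows "Gtilde g m n \<ge> Gtilde g 1 n"
proof -
  have "integral {-(pi/2)..-(pi/2)+pi} (obs_prod g 1 n)
      \<le> integral {-(pi/2)..-(pi/2)+pi} (obs_prod g m n)"
    using range by (intro integral_le_if_le_mean_of_shifts[OF n_pos]
        obs_prod_integrable_on[OF meas range] obs_prod_periodic[where g=g, OF periodic]
        obs_prod_1_le_mean_of_shifts[where g=g, OF _ periodic n_pos]) auto
  then show ?thesis
    by (simp add: Gtilde_eq_integral[OF meas range] divide_right_mono)
qed

end
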